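(* Let $F,K\ge1$ and $0\le Z<F$ be integers such that $\frac{K(F-Z)}{Z+1}$ is an integer, and suppose an RPDA$(F,K,Z)$ exists. Then for every integer $x$ with $0\le x<\frac{Z+1}{F-Z}$ and $x<K$, an RPDA$(F,K-x,Z)$ exists.
   Context: A placement delivery array $S$-PDA$(F,K,Z)$ is an $F\times K$ array $R=(r_{j,k})$, $1\le j\le F$, $1\le k\le K$, over a finite set $S$ such that: (1) each cell is either empty or contains an element of $S$; (2) each column contains exactly $Z$ empty cells; (3) each element of $S$ occurs at most once in each row and at most once in each column; (4) if two distinct nonempty cells satisfy $r_{j_1,k_1}=r_{j_2,k_2}=t\in S$, then the cells $r_{j_1,k_2}$ and $r_{j_2,k_1}$ are empty. An RPDA$(F,K,Z)$ (restricted PDA) is an $S$-PDA$(F,K,Z)$ with $|S|=\left\lceil\frac{K(F-Z)}{Z+1}\right\rceil$. *)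

theory Defs
  imports Complex_Main
begin

text \<open>An F x K array over S: rows indexed by 0..<F, columns by 0..<K;
  None = empty cell, Some s = cell containing s.\<close>

definition is_PDA :: "'a set \<Rightarrow> nat \<Rightarrow> nat \<Rightarrow> nat \<Rightarrow> (nat \<Rightarrow> nat \<Rightarrow> 'a option) \<Rightarrow> bool" where
  "is_PDA S F K Z R \<longleftrightarrow>
     finite S \<and>
     (\<forall>j<F. \<forall>k<K. \<forall>s. R j k = Some s \<longrightarrow> s \<in> S) \<and>
     (\<forall>k<K. card {j. j < F \<and> R j k = None} = Z) \<and>
     (\<forall>s\<in>S. \<forall>j<F. \<forall>k1<K. \<forall>k2<K. R j k1 = Some s \<and> R j k2 = Some s \<longrightarrow> k1 = k2) \<and>
     (\<forall>s\<in>S. \<forall>k<K. \<forall>j1<F. \<forall>j2<F. R j1 k = Some s \<and> R j2 k = Some s \<longrightarrow> j1 = j2) \<and>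
     (\<forall>s\<in>S. \<forall>j1<F. \<forall>j2<F. \<forall>k1<K. \<forall>k2<K.
        R j1 k1 = Some s \<and> R j2 k2 = Some s \<and> (j1, k1) \<noteq> (j2, k2) \<longrightarrow>
        R j1 k2 = None \<and> R j2 k1 = None)"

definition is_RPDA :: "'a set \<Rightarrow> nat \<Rightarrow> nat \<Rightarrow> nat \<Rightarrow> (nat \<Rightarrow> nat \<Rightarrow> 'a option) \<Rightarrow> bool" where
  "is_RPDA S F K Z R \<longleftrightarrow> is_PDA S F K Z R \<and>
     int (card S) = ceiling ((real K * (real F - real Z)) / (real Z + 1))"

definition RPDA_exists :: "nat \<Rightarrow> nat \<Rightarrow> nat \<Rightarrow> bool" where
  "RPDA_exists F K Z \<longleftrightarrow> (\<exists>(S :: nat set) R. is_RPDA S F K Z R)"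

end

theory Submission
  imports Defs
begin

text \<open>Deleting $x$ columns of an RPDA$(F,K,Z)$ leaves a PDA$(F,K-x,Z)$ over the same symbol set.
  When $(Z+1) \mid K(F-Z)$, the required symbol count $\lceil (K-x)(F-Z)/(Z+1)\rceil$ equals
  $K(F-Z)/(Z+1) - \lfloor x(F-Z)/(Z+1)\rfloor$, which is unchanged as long as $x(F-Z) < Z+1$,
  so the truncated array is again restricted.\<close>

lemma is_PDA_restrict_columns:
  assumes "is_PDA S F K Z R" and "K' \<le> K"
  shows "is_PDA S F K' Z R"
proof -
  have "\<And>k. k < K' \<Longrightarrow> k < K" using assms(2) by simp
  then show ?thesis using assms(1) unfolding is_PDA_def by meson
qed

lemma ceiling_diff_columns_eq:
  fixes K x d c :: nat
  assumes "c dvd K * d" and "x \<le> K" and "x * d < c"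
  shows "\<lceil>real (K - x) * real d / real c\<rceil> = \<lceil>real K * real d / real c\<rceil>"
proof -
  obtain N where N: "K * d = c * N" using assms(1) by blast
  have c_pos: "real c > 0" using assms(3) by simp
  have KN: "real K * real d / real c = real N"
    using N c_pos by (simp add: field_simps flip: of_nat_mult)
  have diff: "real (K - x) * real d / real c = real N - real x * real d / real c"
    using assms(2) KN by (simp add: diff_divide_distrib left_diff_distrib)
  have "real x * real d / real c < 1"
    using assms(3) c_pos by (simp flip: of_nat_mult)
  moreover have "real x * real d / real c \<ge> 0" by simp
  ultimately have "\<lceil>real (K - x) * real d / real c\<rceil> = int N"
    unfolding diff by (intro ceiling_unique) simp_all
  then show ?thesis unfolding KN by simp
qed

theorem mainTheorem8:
  fixes F K Z :: nat
  assumes "F \<ge> 1" and "K \<ge> 1" and "Z < F"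
    and "(Z + 1) dvd (K * (F - Z))"
    and "RPDA_exists F K Z"
  shows "\<forall>x::nat. real x < (real Z + 1) / (real F - real Z) \<and> x < K
           \<longrightarrow> RPDA_exists F (K - x) Z"
proof (intro allI impI)
  fix x :: nat
  assume x: "real x < (real Z + 1) / (real F - real Z) \<and> x < K"
  obtain S :: "nat set" and R where SR: "is_RPDA S F K Z R"
    using assms(5) unfolding RPDA_exists_def by blast
  have d: "real (F - Z) = real F - real Z" using assms(3) by simp
  have "real x * (real F - real Z) < real Z + 1"
    using x assms(3) by (simp add: pos_less_divide_eq)
  then have "real (x * (F - Z)) < real (Z + 1)" unfolding of_nat_mult d by simp
  then have "x * (F - Z) < Z + 1" by (simp only: of_nat_less_iff)
  then have "\<lceil>real (K - x) * (real F - real Z) / (real Z + 1)\<rceil>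
           = \<lceil>real K * (real F - real Z) / (real Z + 1)\<rceil>"
    using ceiling_diff_columns_eq[OF assms(4) less_imp_le[OF conjunct2[OF x]]]
    by (simp only: d of_nat_add of_nat_1)
  then have "is_RPDA S F (K - x) Z R"
    using SR is_PDA_restrict_columns[of S F K Z R "K - x"] unfolding is_RPDA_def by simp
  then show "RPDA_exists F (K - x) Z" unfolding RPDA_exists_def by blast
qed

end
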